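(* There exists an abelian sp-group $G$ whose $p$-components $T_p$ are all finite and such that $G/T$ has torsion-free rank $1$ (hence $G/T$ is strongly co-Hopfian), but neither the torsion subgroup $T$ nor $G$ is strongly co-Hopfian.
   Context: All groups are abelian. $T$ is the torsion subgroup of $G$ and $T_p$ its $p$-primary component. A mixed group $G$ with infinitely many non-zero $T_p$ is an sp-group if it is a pure subgroup of $\prod_p T_p$ containing $\bigoplus_p T_p$. A group is strongly co-Hopfian if for every endomorphism $f$ there is $n\in\mathbb N$ with $f^n(G)=f^{n+1}(G)$. *)

theory Defs
  imports "HOL-Algebra.Algebra" "HOL-Computational_Algebra.Primes"
begin

abbreviation nat_prime :: "nat \<Rightarrow> bool" where
  "nat_prime p \<equiv> Factorial_Ring.prime p"

text \<open>Abelian groups are written multiplicatively (HOL-Algebra).\<close>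

definition torsion_part :: "('a, 'b) monoid_scheme \<Rightarrow> 'a set" where
  "torsion_part G = {x \<in> carrier G. \<exists>n::nat. n > 0 \<and> x [^]\<^bsub>G\<^esub> n = \<one>\<^bsub>G\<^esub>}"

definition p_component :: "('a, 'b) monoid_scheme \<Rightarrow> nat \<Rightarrow> 'a set" where
  "p_component G p = {x \<in> carrier G. \<exists>k::nat. x [^]\<^bsub>G\<^esub> (p ^ k) = \<one>\<^bsub>G\<^esub>}"

definition pure_subgroup :: "'a set \<Rightarrow> ('a, 'b) monoid_scheme \<Rightarrow> bool" where
  "pure_subgroup H A \<longleftrightarrow> subgroup H A \<and>
     (\<forall>n::nat. n > 0 \<longrightarrow> (\<forall>x\<in>H. (\<exists>y\<in>carrier A. y [^]\<^bsub>A\<^esub> n = x) \<longrightarrow> (\<exists>y\<in>H. y [^]\<^bsub>A\<^esub> n = x)))"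

definition prod_components :: "('a, 'b) monoid_scheme \<Rightarrow> (nat \<Rightarrow> 'a) monoid" where
  "prod_components G = product_group {p. nat_prime p} (\<lambda>p. subgroup_generated G (p_component G p))"

definition sum_components :: "('a, 'b) monoid_scheme \<Rightarrow> (nat \<Rightarrow> 'a) monoid" where
  "sum_components G = sum_group {p. nat_prime p} (\<lambda>p. subgroup_generated G (p_component G p))"

text \<open>sp-group: mixed abelian group with infinitely many non-zero T_p, which (via an embedding
  that is the canonical inclusion on each T_p) is a pure subgroup of the product of the T_p
  containing their direct sum.\<close>
definition sp_group :: "('a, 'b) monoid_scheme \<Rightarrow> bool" where
  "sp_group G \<longleftrightarrow> comm_group G \<and>
     infinite {p::nat. nat_prime p \<and> p_component G p \<noteq> {\<one>\<^bsub>G\<^esub>}} \<and>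
     (\<exists>\<phi>. \<phi> \<in> hom G (prod_components G) \<and> inj_on \<phi> (carrier G) \<and>
        (\<forall>p x. nat_prime p \<and> x \<in> p_component G p \<longrightarrow>
            \<phi> x = (\<lambda>q\<in>{q. nat_prime q}. if q = p then x else \<one>\<^bsub>G\<^esub>)) \<and>
        pure_subgroup (\<phi> ` carrier G) (prod_components G) \<and>
        carrier (sum_components G) \<subseteq> \<phi> ` carrier G)"

definition strongly_co_hopfian :: "('a, 'b) monoid_scheme \<Rightarrow> bool" where
  "strongly_co_hopfian A \<longleftrightarrow>
     (\<forall>f \<in> hom A A. \<exists>n::nat. (f ^^ n) ` carrier A = (f ^^ (Suc n)) ` carrier A)"

definition infinite_order_elems :: "('a, 'b) monoid_scheme \<Rightarrow> 'a set" where
  "infinite_order_elems A = {x \<in> carrier A. \<forall>n::nat. n > 0 \<longrightarrow> x [^]\<^bsub>A\<^esub> n \<noteq> \<one>\<^bsub>A\<^esub>}"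

definition independent_set :: "('a, 'b) monoid_scheme \<Rightarrow> 'a set \<Rightarrow> bool" where
  "independent_set A S \<longleftrightarrow> S \<subseteq> carrier A \<and>
     (\<forall>F (c :: 'a \<Rightarrow> int). finite F \<and> F \<subseteq> S \<and>
        finprod A (\<lambda>x. x [^]\<^bsub>A\<^esub> c x) F = \<one>\<^bsub>A\<^esub> \<longrightarrow>
        (\<forall>x\<in>F. x [^]\<^bsub>A\<^esub> c x = \<one>\<^bsub>A\<^esub>))"

text \<open>A has torsion-free rank r: there is a maximal independent system of elements of
  infinite order of cardinality r (the cardinality is independent of the choice).\<close>
definition has_tf_rank :: "('a, 'b) monoid_scheme \<Rightarrow> nat \<Rightarrow> bool" where
  "has_tf_rank A r \<longleftrightarrow> (\<exists>S. S \<subseteq> infinite_order_elems A \<and> independent_set A S \<and>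
     (\<forall>S'. S \<subseteq> S' \<and> S' \<subseteq> infinite_order_elems A \<and> independent_set A S' \<longrightarrow> S' = S) \<and>
     finite S \<and> card S = r)"

end

theory Submission
  imports Defs "HOL-Number_Theory.Cong"
begin

(* G is the subgroup of the product of the Z/p^p (p prime) consisting of the sequences x that
  agree, in all but finitely many coordinates, with a fixed rational multiple of
  e = (p^(p-1))_p: n x_p = m e_p (mod p^p) for almost all p, with n > 0.  Its torsion part T
  is the direct sum of the T_p = Z/p^p, and G is pure in the product because n y in G already
  forces y in G.  As n is invertible modulo p^p for p > n, the quotient G/T is torsion-free and
  divisible, and any two of its elements are rationally dependent; so G/T is a rank-one
  subgroup of Q, and its nonzero endomorphisms are surjective.  On the other hand, multiplying
  the p-th coordinate by p is an endomorphism of G and of T (it kills e, as p e_p = p^p), and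
  the unit vector at a prime q > n + 1 lies in its n-th image but not in its (n+1)-st, so the
  images never stabilise. *)


section \<open>Torsion-free divisible groups of rank one\<close>

locale rank_one_group = comm_group +
  fixes a
  assumes a_closed: "a \<in> carrier G"
    and a_infinite_order: "\<And>n::nat. 0 < n \<Longrightarrow> a [^] n \<noteq> \<one>"
    and rationally_dependent:
      "\<And>y. y \<in> carrier G \<Longrightarrow> \<exists>n::nat. 0 < n \<and> (\<exists>m::int. y [^] n = a [^] m)"

lemma (in rank_one_group) has_tf_rank_one: "has_tf_rank G 1"
proof -
  have a_inf: "a \<in> infinite_order_elems G"
    using a_closed a_infinite_order unfolding infinite_order_elems_def by auto
  have indep: "independent_set G {a}"
    unfolding independent_set_def
  proof (intro conjI allI impI ballI)
    fix F and c :: "'a \<Rightarrow> int" and x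
    assume "finite F \<and> F \<subseteq> {a} \<and> finprod G (\<lambda>x. x [^] c x) F = \<one>" and "x \<in> F"
    then show "x [^] c x = \<one>" using a_closed by (cases "F = {a}") auto
  qed (use a_closed in simp)
  have maximal: "S = {a}"
    if S: "{a} \<subseteq> S" "S \<subseteq> infinite_order_elems G" "independent_set G S" for S
  proof (rule ccontr)
    assume "S \<noteq> {a}"
    then obtain y where y: "y \<in> S" "y \<noteq> a" using S(1) by blast
    then have y_inf: "y \<in> carrier G" "\<And>n::nat. 0 < n \<Longrightarrow> y [^] n \<noteq> \<one>"
      using S(2) unfolding infinite_order_elems_def by auto
    obtain n :: nat and m :: int where nm: "0 < n" "y [^] n = a [^] m"
      using rationally_dependent[OF y_inf(1)] by blast
    define c where "c = (\<lambda>z. if z = a then - m else int n)"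
    have "finprod G (\<lambda>x. x [^] c x) {a, y} = a [^] (- m) \<otimes> y [^] n"
      using y(2) a_closed y_inf(1) by (simp add: c_def int_pow_int)
    also have "\<dots> = \<one>"
      using nm(2) a_closed y_inf(1) by (simp add: int_pow_neg)
    finally have prod: "finprod G (\<lambda>x. x [^] c x) {a, y} = \<one>" .
    have sub: "{a, y} \<subseteq> S" using S(1) y(1) by blast
    have "\<forall>F (c :: 'a \<Rightarrow> int). finite F \<and> F \<subseteq> S \<and> finprod G (\<lambda>x. x [^] c x) F = \<one> \<longrightarrow>
        (\<forall>x\<in>F. x [^] c x = \<one>)"
      using S(3) unfolding independent_set_def by (rule conjunct2)
    from this[rule_format, of "{a, y}" c] have "y [^] c y = \<one>"
      using prod sub by simp
    then have "y [^] n = \<one>" using y(2) by (simp add: c_def int_pow_int)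
    then show False using y_inf(2) nm(1) by blast
  qed
  show ?thesis
    unfolding has_tf_rank_def using a_inf indep maximal by (intro exI[of _ "{a}"]) simp
qed

locale divisible_rank_one_group = rank_one_group +
  assumes torsion_free: "\<And>y k. y \<in> carrier G \<Longrightarrow> 0 < (k::nat) \<Longrightarrow> y [^] k = \<one> \<Longrightarrow> y = \<one>"
    and divisible: "\<And>y k. y \<in> carrier G \<Longrightarrow> 0 < (k::nat) \<Longrightarrow> \<exists>w\<in>carrier G. w [^] k = y"
begin

lemma int_pow_eq_one_imp_eq_one:
  assumes x: "x \<in> carrier G" and N: "N \<noteq> (0::int)" and e: "x [^] N = \<one>"
  shows "x = \<one>"
proof -
  have "x [^] \<bar>N\<bar> = \<one>"
    using e int_pow_neg[OF x, of N] by (simp add: abs_if)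
  then have "x [^] nat \<bar>N\<bar> = \<one>" using pow_nat[of "\<bar>N\<bar>"] by simp
  from torsion_free[OF x _ this] N show ?thesis by simp
qed

lemma int_pow_cancel:
  assumes "x \<in> carrier G" "y \<in> carrier G" "N \<noteq> (0::int)" "x [^] N = y [^] N"
  shows "x = y"
proof -
  have "(x \<otimes> inv y) [^] N = x [^] N \<otimes> inv (y [^] N)"
    using assms int_pow_distrib[of x "inv y" N] int_pow_inv[of y N] by simp
  also have "\<dots> = \<one>" using assms by simp
  finally have "x \<otimes> inv y = \<one>"
    using assms int_pow_eq_one_imp_eq_one[of "x \<otimes> inv y"] by simp
  then show ?thesis using assms by (simp add: inv_solve_right')
qed

lemma int_root_exists:
  assumes v: "v \<in> carrier G" and N: "N \<noteq> (0::int)"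
  shows "\<exists>w\<in>carrier G. w [^] N = v"
proof -
  obtain w where w: "w \<in> carrier G" "w [^] nat \<bar>N\<bar> = v"
    using divisible[OF v, of "nat \<bar>N\<bar>"] N by auto
  then have wN: "w [^] \<bar>N\<bar> = v" using pow_nat[of "\<bar>N\<bar>"] by simp
  show ?thesis
  proof (cases "0 < N")
    case True
    then show ?thesis using w(1) wN by auto
  next
    case False
    have "inv w [^] (- \<bar>N\<bar>) = v"
      using w(1) wN v by (simp add: int_pow_inv int_pow_neg)
    moreover have "- \<bar>N\<bar> = N" using False by simp
    ultimately show ?thesis using w(1) by auto
  qed
qed

lemma endomorphism_trivial:
  assumes f: "f \<in> hom G G" and fa: "f a = \<one>" and y: "y \<in> carrier G"
  shows "f y = \<one>"
proof -
  obtain n :: nat and m :: int where nm: "0 < n" "y [^] n = a [^] m"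
    using rationally_dependent[OF y] by blast
  have "f y [^] n = f (y [^] n)" using hom_nat_pow[OF f y is_group is_group] by simp
  also have "\<dots> = f a [^] m" using nm(2) hom_int_pow[OF f a_closed is_group is_group] by simp
  also have "\<dots> = \<one>" using fa by simp
  finally show ?thesis using torsion_free[OF hom_in_carrier[OF f y] nm(1)] by simp
qed

lemma endomorphism_surjective:
  assumes f: "f \<in> hom G G" and fa: "f a \<noteq> \<one>" and z: "z \<in> carrier G"
  shows "z \<in> f ` carrier G"
proof -
  have fa_closed: "f a \<in> carrier G" using f a_closed by (rule hom_in_carrier)
  obtain k' :: nat and m' :: int where km': "0 < k'" "f a [^] k' = a [^] m'"
    using rationally_dependent[OF fa_closed] by blast
  have "m' \<noteq> 0"
    using km' torsion_free[OF fa_closed] fa by auto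
  obtain k :: nat and m :: int where km: "0 < k" "z [^] k = a [^] m"
    using rationally_dependent[OF z] by blast
  define N where "N = int k * m'"
  have N: "N \<noteq> 0" using km(1) \<open>m' \<noteq> 0\<close> by (simp add: N_def)
  obtain w where w: "w \<in> carrier G" "w [^] N = a [^] (int k' * m)"
    using int_root_exists[OF _ N] a_closed by blast
  have "f w [^] N = f (a [^] (int k' * m))"
    using hom_int_pow[OF f w(1) is_group is_group, of N, symmetric] w(2) by simp
  also have "\<dots> = (f a [^] int k') [^] m"
    using hom_int_pow[OF f a_closed is_group is_group] fa_closed by (simp add: int_pow_pow)
  also have "\<dots> = a [^] (m' * m)"
    using km'(2) a_closed by (simp add: int_pow_int int_pow_pow)
  also have "\<dots> = (z [^] int k) [^] m'"
    using km(2) a_closed by (simp add: int_pow_int int_pow_pow mult.commute)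
  also have "\<dots> = z [^] N"
    using z by (simp add: int_pow_pow N_def)
  finally have "f w = z"
    using int_pow_cancel hom_in_carrier[OF f w(1)] z N by blast
  then show ?thesis using w(1) by blast
qed

lemma strongly_co_hopfian: "strongly_co_hopfian G"
  unfolding strongly_co_hopfian_def
proof
  fix f assume f: "f \<in> hom G G"
  show "\<exists>n. (f ^^ n) ` carrier G = (f ^^ Suc n) ` carrier G"
  proof (cases "f a = \<one>")
    case True
    then have "f ` carrier G = {\<one>}"
      using endomorphism_trivial[OF f] by auto
    moreover have "(f ^^ 2) ` carrier G = f ` f ` carrier G"
      by (simp add: numeral_2_eq_2 image_image)
    ultimately have "(f ^^ 1) ` carrier G = (f ^^ 2) ` carrier G"
      using hom_one[OF f is_group is_group] by simp
    then show ?thesis by (metis One_nat_def numeral_2_eq_2)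
  next
    case False
    then have "f ` carrier G = carrier G"
      using endomorphism_surjective[OF f] hom_in_carrier[OF f] by auto
    then have "(f ^^ 0) ` carrier G = (f ^^ 1) ` carrier G" by simp
    then show ?thesis by (metis One_nat_def)
  qed
qed

end

lemma mult_prod_components:
  "x \<otimes>\<^bsub>prod_components G\<^esub> y = (\<lambda>p\<in>{p. nat_prime p}. x p \<otimes>\<^bsub>G\<^esub> y p)"
  by (simp add: prod_components_def)

lemma nat_pow_prod_components:
  "nat_prime p \<Longrightarrow> (y [^]\<^bsub>prod_components G\<^esub> (n::nat)) p = y p [^]\<^bsub>G\<^esub> n"
  by (induction n) (simp_all add: prod_components_def)

lemma (in group) group_prod_components: "group (prod_components G)"
  unfolding prod_components_def by (rule product_group) simp

section \<open>The product of the groups Z/q^q\<close>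

definition modulus :: "nat \<Rightarrow> nat" where
  "modulus q = (if nat_prime q then q ^ q else 1)"

definition reduce :: "(nat \<Rightarrow> int) \<Rightarrow> nat \<Rightarrow> nat" where
  "reduce f q = nat (f q mod int (modulus q))"

(* The product of the Z/modulus q over all q, each residue stored as its least non-negative
  representative; at non-primes q the factor is Z/1, so these coordinates are always 0. *)
definition residue_box :: "(nat \<Rightarrow> nat) monoid" where
  "residue_box = \<lparr>carrier = {x. \<forall>q. x q < modulus q},
     monoid.mult = (\<lambda>x y. reduce (\<lambda>q. int (x q) + int (y q))), one = (\<lambda>q. 0)\<rparr>"

lemma modulus_pos: "0 < modulus q"
  by (simp add: modulus_def prime_gt_0_nat)

lemma int_reduce: "int (reduce f q) = f q mod int (modulus q)"
  using modulus_pos[of q] by (simp add: reduce_def)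

lemma cong_reduce: "[int (reduce f q) = f q] (mod int (modulus q))"
  by (simp add: int_reduce cong_def)

lemma reduce_eq_iff: "reduce f = reduce g \<longleftrightarrow> (\<forall>q. [f q = g q] (mod int (modulus q)))"
proof
  assume "reduce f = reduce g"
  then have "int (reduce f q) = int (reduce g q)" for q by simp
  then show "\<forall>q. [f q = g q] (mod int (modulus q))" by (simp add: int_reduce cong_def)
qed (auto simp: reduce_def cong_def)

lemma carrier_residue_box: "carrier residue_box = {x. \<forall>q. x q < modulus q}"
  by (simp add: residue_box_def)

lemma mult_residue_box: "x \<otimes>\<^bsub>residue_box\<^esub> y = reduce (\<lambda>q. int (x q) + int (y q))"
  by (simp add: residue_box_def)

lemma one_residue_box: "\<one>\<^bsub>residue_box\<^esub> = (\<lambda>q. 0)"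
  by (simp add: residue_box_def)

lemma reduce_less: "reduce f q < modulus q"
  using modulus_pos[of q] by (simp add: reduce_def nat_less_iff)

lemma reduce_closed [simp]: "reduce f \<in> carrier residue_box"
  by (simp add: carrier_residue_box reduce_less)

lemma reduce_of_box: "x \<in> carrier residue_box \<Longrightarrow> reduce (\<lambda>q. int (x q)) = x"
  by (auto simp: carrier_residue_box reduce_def)

lemma box_coord_eq_0_iff:
  "x \<in> carrier residue_box \<Longrightarrow> x q = 0 \<longleftrightarrow> [int (x q) = 0] (mod int (modulus q))"
  by (auto simp: carrier_residue_box cong_def)

lemma reduce_zero: "reduce (\<lambda>q. 0) = (\<lambda>q. 0)"
  by (rule ext) (simp add: reduce_def)

lemma reduce_eq_zero_iff: "reduce f = (\<lambda>q. 0) \<longleftrightarrow> (\<forall>q. [f q = 0] (mod int (modulus q)))"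
  using reduce_eq_iff[of f "\<lambda>q. 0"] by (simp add: reduce_zero)

lemma reduce_neg_mult: "reduce (\<lambda>q. - int (x q)) \<otimes>\<^bsub>residue_box\<^esub> x = \<one>\<^bsub>residue_box\<^esub>"
  unfolding mult_residue_box one_residue_box reduce_zero[symmetric] reduce_eq_iff int_reduce cong_def
  by (simp add: mod_add_left_eq)

lemma comm_group_residue_box: "comm_group residue_box"
proof (rule comm_groupI)
  fix x y z
  assume "x \<in> carrier residue_box" "y \<in> carrier residue_box" "z \<in> carrier residue_box"
  show "x \<otimes>\<^bsub>residue_box\<^esub> y \<otimes>\<^bsub>residue_box\<^esub> z = x \<otimes>\<^bsub>residue_box\<^esub> (y \<otimes>\<^bsub>residue_box\<^esub> z)"
    unfolding mult_residue_box reduce_eq_iff int_reduce cong_def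
    by (simp add: mod_add_left_eq mod_add_right_eq add.assoc)
  show "x \<otimes>\<^bsub>residue_box\<^esub> y = y \<otimes>\<^bsub>residue_box\<^esub> x"
    by (simp add: mult_residue_box add.commute)
next
  fix x assume x: "x \<in> carrier residue_box"
  show "\<one>\<^bsub>residue_box\<^esub> \<otimes>\<^bsub>residue_box\<^esub> x = x"
    using x by (simp add: one_residue_box mult_residue_box reduce_of_box)
  show "\<exists>y\<in>carrier residue_box. y \<otimes>\<^bsub>residue_box\<^esub> x = \<one>\<^bsub>residue_box\<^esub>"
    using reduce_closed reduce_neg_mult by blast
qed (auto simp: mult_residue_box one_residue_box carrier_residue_box modulus_pos reduce_less)

interpretation B: comm_group residue_box
  by (rule comm_group_residue_box)

lemma nat_pow_residue_box:
  assumes "x \<in> carrier residue_box"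
  shows "x [^]\<^bsub>residue_box\<^esub> (k::nat) = reduce (\<lambda>q. int k * int (x q))"
proof (induction k)
  case 0
  then show ?case by (simp add: one_residue_box reduce_zero)
next
  case (Suc k)
  then show ?case
    unfolding nat_pow_Suc mult_residue_box reduce_eq_iff cong_def
    by (simp add: int_reduce mod_add_right_eq distrib_right add.commute)
qed

lemma inv_residue_box:
  assumes "x \<in> carrier residue_box"
  shows "inv\<^bsub>residue_box\<^esub> x = reduce (\<lambda>q. - int (x q))"
proof (rule B.inv_equality)
  show "reduce (\<lambda>q. - int (x q)) \<otimes>\<^bsub>residue_box\<^esub> x = \<one>\<^bsub>residue_box\<^esub>"
    by (rule reduce_neg_mult)
qed (use assms in simp_all)

lemma box_coord_nonprime:
  assumes "x \<in> carrier residue_box" "\<not> nat_prime q"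
  shows "x q = 0"
proof -
  have "x q < modulus q" using assms(1) by (simp add: carrier_residue_box)
  with assms(2) show ?thesis by (simp add: modulus_def)
qed

lemma mult_residue_box_coord_zero:
  "x q = 0 \<Longrightarrow> y q = 0 \<Longrightarrow> (x \<otimes>\<^bsub>residue_box\<^esub> y) q = 0"
  by (simp add: mult_residue_box reduce_def)

lemma inv_residue_box_coord_zero:
  "x \<in> carrier residue_box \<Longrightarrow> x q = 0 \<Longrightarrow> (inv\<^bsub>residue_box\<^esub> x) q = 0"
  by (simp add: inv_residue_box reduce_def)

lemma int_pow_residue_box:
  assumes x: "x \<in> carrier residue_box"
  shows "x [^]\<^bsub>residue_box\<^esub> (k::int) = reduce (\<lambda>q. k * int (x q))"
proof (cases "k < 0")
  case True
  define f where "f = (\<lambda>q. int (nat (- k)) * int (x q))"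
  have "x [^]\<^bsub>residue_box\<^esub> k = inv\<^bsub>residue_box\<^esub> (x [^]\<^bsub>residue_box\<^esub> nat (- k))"
    using B.int_pow_neg[OF x, of "- k"] pow_nat[of "- k" residue_box x] True by simp
  also have "\<dots> = reduce (\<lambda>q. - int (reduce f q))"
    using x by (simp add: inv_residue_box nat_pow_residue_box f_def)
  also have "\<dots> = reduce (\<lambda>q. k * int (x q))"
    unfolding reduce_eq_iff
  proof
    fix q
    have "[- int (reduce f q) = - f q] (mod int (modulus q))"
      using cong_reduce cong_minus_minus_iff by blast
    then show "[- int (reduce f q) = k * int (x q)] (mod int (modulus q))"
      using True by (simp add: f_def)
  qed
  finally show ?thesis .
next
  case False
  then have "x [^]\<^bsub>residue_box\<^esub> k = x [^]\<^bsub>residue_box\<^esub> nat k"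
    by (simp add: pow_nat)
  also have "\<dots> = reduce (\<lambda>q. k * int (x q))"
    using False by (simp add: nat_pow_residue_box[OF x])
  finally show ?thesis .
qed

lemma cong_mult_residue_box:
  "[int ((x \<otimes>\<^bsub>residue_box\<^esub> y) q) = int (x q) + int (y q)] (mod int (modulus q))"
  unfolding mult_residue_box by (rule cong_reduce)

lemma cong_int_pow_residue_box:
  "x \<in> carrier residue_box \<Longrightarrow>
    [int ((x [^]\<^bsub>residue_box\<^esub> (k::int)) q) = k * int (x q)] (mod int (modulus q))"
  unfolding int_pow_residue_box by (rule cong_reduce)

lemma cong_nat_pow_residue_box:
  "x \<in> carrier residue_box \<Longrightarrow>
    [int ((x [^]\<^bsub>residue_box\<^esub> (k::nat)) q) = int k * int (x q)] (mod int (modulus q))"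
  unfolding nat_pow_residue_box by (rule cong_reduce)

lemma cong_mult_inv_residue_box:
  assumes "x \<in> carrier residue_box"
  shows "[int ((y \<otimes>\<^bsub>residue_box\<^esub> inv\<^bsub>residue_box\<^esub> x) q) = int (y q) - int (x q)]
    (mod int (modulus q))"
proof -
  have "[int ((inv\<^bsub>residue_box\<^esub> x) q) = - int (x q)] (mod int (modulus q))"
    unfolding inv_residue_box[OF assms] by (rule cong_reduce)
  then show ?thesis
    using cong_add[OF cong_refl[of "int (y q)"]] cong_mult_residue_box cong_trans by fastforce
qed

lemma nat_pow_eq_one_iff:
  assumes "x \<in> carrier residue_box"
  shows "x [^]\<^bsub>residue_box\<^esub> (k::nat) = \<one>\<^bsub>residue_box\<^esub> \<longleftrightarrow>
    (\<forall>q. [int k * int (x q) = 0] (mod int (modulus q)))"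
  by (simp add: nat_pow_residue_box[OF assms] one_residue_box reduce_eq_zero_iff)

lemma coprime_modulus:
  assumes "nat_prime q \<Longrightarrow> \<not> q dvd k"
  shows "coprime (int k) (int (modulus q))"
proof (cases "nat_prime q")
  case True
  then have "coprime k q" using assms by (metis coprime_commute prime_imp_coprime)
  then show ?thesis using True by (simp add: modulus_def)
qed (simp add: modulus_def)

lemma cong_modulus_cancel:
  assumes "nat_prime q \<Longrightarrow> \<not> q dvd k" "[int k * a = int k * b] (mod int (modulus q))"
  shows "[a = b] (mod int (modulus q))"
  using assms cong_mult_lcancel[OF coprime_modulus] by blast

lemma eventually_cong_cancel:
  assumes "0 < k" "\<forall>\<^sub>F q in sequentially. [int k * a q = int k * b q] (mod int (modulus q))"
  shows "\<forall>\<^sub>F q in sequentially. [a q = b q] (mod int (modulus q))"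
  using eventually_gt_at_top[of k] assms(2)
proof eventually_elim
  case (elim q)
  then show ?case using assms(1) cong_modulus_cancel nat_dvd_not_less by blast
qed

lemma residue_box_eventually_divisible:
  assumes "0 < k"
  obtains w where "w \<in> carrier residue_box"
    "\<forall>\<^sub>F q in sequentially. [int k * int (w q) = int (x q)] (mod int (modulus q))"
proof
  define w where "w = reduce (\<lambda>q. SOME u. [int k * u = int (x q)] (mod int (modulus q)))"
  show "w \<in> carrier residue_box" by (simp add: w_def)
  show "\<forall>\<^sub>F q in sequentially. [int k * int (w q) = int (x q)] (mod int (modulus q))"
    using eventually_gt_at_top[of k]
  proof eventually_elim
    case (elim q)
    have "coprime (int k) (int (modulus q))"
      using coprime_modulus nat_dvd_not_less elim assms by blast
    then obtain v where v: "[int k * v = 1] (mod int (modulus q))"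
      using cong_solve_coprime_int by blast
    have "[int k * (v * int (x q)) = int (x q)] (mod int (modulus q))"
      using cong_scalar_right[OF v, of "int (x q)"] by (simp add: mult.assoc)
    then have "[int k * (SOME u. [int k * u = int (x q)] (mod int (modulus q))) = int (x q)]
        (mod int (modulus q))"
      by (rule someI)
    moreover have "[int k * int (w q) =
        int k * (SOME u. [int k * u = int (x q)] (mod int (modulus q)))] (mod int (modulus q))"
      unfolding w_def by (rule cong_scalar_left[OF cong_reduce])
    ultimately show ?case by (rule cong_trans[rotated])
  qed
qed

lemma ex_prime_if_eventually: "\<forall>\<^sub>F q in sequentially. P q \<Longrightarrow> \<exists>q. nat_prime q \<and> P q"
  by (metis bigger_prime eventually_sequentially less_le_not_le nle_le)

section \<open>The example group\<close>

definition e_seq :: "nat \<Rightarrow> nat" where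
  "e_seq q = (if nat_prime q then q ^ (q - 1) else 0)"

lemma index_mult_e_seq_cong_zero: "[int q * int (e_seq q) = 0] (mod int (modulus q))"
proof (cases "nat_prime q")
  case True
  then have "q ^ q = q ^ Suc (q - 1)" using prime_gt_0_nat[OF True] by simp
  then have "q * e_seq q = modulus q" using True by (simp add: e_seq_def modulus_def)
  then have "int q * int (e_seq q) = int (modulus q)" by (metis of_nat_mult)
  then show ?thesis unfolding cong_0_iff by simp
qed (simp add: modulus_def)

lemma e_seq_not_cong_zero:
  assumes q: "nat_prime q"
  shows "\<not> [int (e_seq q) = 0] (mod int (modulus q))"
proof
  assume "[int (e_seq q) = 0] (mod int (modulus q))"
  then have "q ^ q dvd q ^ (q - 1)"
    using q by (simp add: cong_0_iff e_seq_def modulus_def flip: of_nat_power)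
  then have "q ^ q \<le> q ^ (q - 1)"
    using q by (simp add: dvd_imp_le prime_gt_0_nat)
  moreover have "q ^ (q - 1) < q ^ q"
    using prime_gt_1_nat[OF q] by (simp add: power_strict_increasing)
  ultimately show False by simp
qed

definition eventually_rational_multiple :: "(nat \<Rightarrow> nat) \<Rightarrow> bool" where
  "eventually_rational_multiple x \<longleftrightarrow> (\<exists>n::nat. 0 < n \<and> (\<exists>m::int.
     \<forall>\<^sub>F q in sequentially. [int n * int (x q) = m * int (e_seq q)] (mod int (modulus q))))"

lemma eventually_rational_multipleI:
  "0 < n \<Longrightarrow> \<forall>\<^sub>F q in sequentially. [int n * int (x q) = m * int (e_seq q)] (mod int (modulus q))
    \<Longrightarrow> eventually_rational_multiple x"
  unfolding eventually_rational_multiple_def by blast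

lemma eventually_rational_multipleE:
  assumes "eventually_rational_multiple x"
  obtains n :: nat and m :: int where "0 < n"
    "\<forall>\<^sub>F q in sequentially. [int n * int (x q) = m * int (e_seq q)] (mod int (modulus q))"
  using assms unfolding eventually_rational_multiple_def by blast

lemma eventually_rational_multiple_e_seq: "eventually_rational_multiple e_seq"
  by (rule eventually_rational_multipleI[of 1 _ 1]) simp_all

lemma eventually_rational_multiple_mult:
  assumes "eventually_rational_multiple x" "eventually_rational_multiple y"
  shows "eventually_rational_multiple (x \<otimes>\<^bsub>residue_box\<^esub> y)"
proof -
  obtain n1 m1 where n1: "0 < n1"
    and x: "\<forall>\<^sub>F q in sequentially. [int n1 * int (x q) = m1 * int (e_seq q)] (mod int (modulus q))"
    using assms(1) by (rule eventually_rational_multipleE)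
  obtain n2 m2 where n2: "0 < n2"
    and y: "\<forall>\<^sub>F q in sequentially. [int n2 * int (y q) = m2 * int (e_seq q)] (mod int (modulus q))"
    using assms(2) by (rule eventually_rational_multipleE)
  have "\<forall>\<^sub>F q in sequentially. [int (n1 * n2) * int ((x \<otimes>\<^bsub>residue_box\<^esub> y) q) =
      (int n2 * m1 + int n1 * m2) * int (e_seq q)] (mod int (modulus q))"
    using x y
  proof eventually_elim
    case (elim q)
    have "[int (n1 * n2) * int ((x \<otimes>\<^bsub>residue_box\<^esub> y) q) =
        int n2 * (int n1 * int (x q)) + int n1 * (int n2 * int (y q))] (mod int (modulus q))"
      using cong_scalar_left[OF cong_mult_residue_box, of "int (n1 * n2)"] by (simp add: algebra_simps)
    also have "[int n2 * (int n1 * int (x q)) + int n1 * (int n2 * int (y q)) =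
        int n2 * (m1 * int (e_seq q)) + int n1 * (m2 * int (e_seq q))] (mod int (modulus q))"
      using elim by (intro cong_add cong_scalar_left)
    finally show ?case by (simp add: algebra_simps)
  qed
  then show ?thesis using n1 n2 by (intro eventually_rational_multipleI[of "n1 * n2"]) simp_all
qed

lemma eventually_rational_multiple_inv:
  assumes "eventually_rational_multiple x"
  shows "eventually_rational_multiple (reduce (\<lambda>q. - int (x q)))"
proof -
  obtain n m where n: "0 < n"
    and x: "\<forall>\<^sub>F q in sequentially. [int n * int (x q) = m * int (e_seq q)] (mod int (modulus q))"
    using assms by (rule eventually_rational_multipleE)
  have "\<forall>\<^sub>F q in sequentially.
      [int n * int (reduce (\<lambda>q. - int (x q)) q) = (- m) * int (e_seq q)] (mod int (modulus q))"
    using x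
  proof eventually_elim
    case (elim q)
    have "[int n * int (reduce (\<lambda>q. - int (x q)) q) = - (int n * int (x q))] (mod int (modulus q))"
      using cong_scalar_left[OF cong_reduce[of "\<lambda>q. - int (x q)" q], of "int n"] by simp
    also have "[- (int n * int (x q)) = - (m * int (e_seq q))] (mod int (modulus q))"
      using elim by (simp add: cong_minus_minus_iff)
    finally show ?case by simp
  qed
  then show ?thesis by (rule eventually_rational_multipleI[OF n])
qed

lemma eventually_rational_multiple_divide:
  assumes "eventually_rational_multiple x" "0 < k"
    and "\<forall>\<^sub>F q in sequentially. [int k * int (w q) = int (x q)] (mod int (modulus q))"
  shows "eventually_rational_multiple w"
proof -
  obtain n m where n: "0 < n"
    and x: "\<forall>\<^sub>F q in sequentially. [int n * int (x q) = m * int (e_seq q)] (mod int (modulus q))"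
    using assms(1) by (rule eventually_rational_multipleE)
  have "\<forall>\<^sub>F q in sequentially. [int (n * k) * int (w q) = m * int (e_seq q)] (mod int (modulus q))"
    using x assms(3)
  proof eventually_elim
    case (elim q)
    have "[int (n * k) * int (w q) = int n * int (x q)] (mod int (modulus q))"
      using cong_scalar_left[OF elim(2), of "int n"] by (simp add: mult.assoc)
    then show ?case using elim(1) by (rule cong_trans)
  qed
  then show ?thesis using n assms(2) by (intro eventually_rational_multipleI[of "n * k"]) simp_all
qed

lemma eventually_rational_multiple_if_eventually_zero:
  "\<forall>\<^sub>F q in sequentially. x q = 0 \<Longrightarrow> eventually_rational_multiple x"
  by (rule eventually_rational_multipleI[of 1 _ 0]) (auto elim: eventually_mono)

definition sp_example :: "(nat \<Rightarrow> nat) monoid" where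
  "sp_example = subgroup_generated residue_box
     {x \<in> carrier residue_box. eventually_rational_multiple x}"

lemma subgroup_eventually_rational_multiple:
  "subgroup {x \<in> carrier residue_box. eventually_rational_multiple x} residue_box"
proof (rule B.subgroupI)
  show "{x \<in> carrier residue_box. eventually_rational_multiple x} \<noteq> {}"
    using B.one_closed eventually_rational_multiple_if_eventually_zero
    by (auto simp: one_residue_box)
qed (auto simp: inv_residue_box eventually_rational_multiple_mult eventually_rational_multiple_inv)

lemma carrier_sp_example:
  "carrier sp_example = {x \<in> carrier residue_box. eventually_rational_multiple x}"
  unfolding sp_example_def
  by (rule subgroup.carrier_subgroup_generated_subgroup[OF subgroup_eventually_rational_multiple])

lemma mult_sp_example: "x \<otimes>\<^bsub>sp_example\<^esub> y = x \<otimes>\<^bsub>residue_box\<^esub> y"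
  by (simp add: sp_example_def)

lemma one_sp_example: "\<one>\<^bsub>sp_example\<^esub> = (\<lambda>q. 0)"
  by (simp add: sp_example_def one_residue_box)

lemma nat_pow_sp_example: "x [^]\<^bsub>sp_example\<^esub> (k::nat) = x [^]\<^bsub>residue_box\<^esub> k"
  by (simp add: sp_example_def pow_subgroup_generated)

lemma int_pow_sp_example:
  "x \<in> carrier sp_example \<Longrightarrow> x [^]\<^bsub>sp_example\<^esub> (k::int) = x [^]\<^bsub>residue_box\<^esub> k"
  unfolding sp_example_def by (rule B.int_pow_subgroup_generated)

lemma comm_group_sp_example: "comm_group sp_example"
  unfolding sp_example_def by (rule B.abelian_subgroup_generated[OF comm_group_residue_box])

interpretation G: comm_group sp_example
  by (rule comm_group_sp_example)

lemma inv_sp_example: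
  "x \<in> carrier sp_example \<Longrightarrow> inv\<^bsub>sp_example\<^esub> x = inv\<^bsub>residue_box\<^esub> x"
  unfolding sp_example_def by (rule B.inv_subgroup_generated)

lemma e_seq_closed: "e_seq \<in> carrier sp_example"
proof -
  have "e_seq q < modulus q" for q
  proof (cases "nat_prime q")
    case True
    then have "q ^ (q - 1) < q ^ q"
      using prime_gt_1_nat[OF True] by (simp add: power_strict_increasing)
    then show ?thesis using True by (simp add: e_seq_def modulus_def)
  qed (simp add: e_seq_def modulus_def)
  then show ?thesis
    using eventually_rational_multiple_e_seq by (simp add: carrier_sp_example carrier_residue_box)
qed

section \<open>Torsion part and primary components\<close>

definition finitely_supported :: "(nat \<Rightarrow> nat) set" where
  "finitely_supported = {x \<in> carrier residue_box. \<forall>\<^sub>F q in sequentially. x q = 0}"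

lemma finitely_supported_subset: "finitely_supported \<subseteq> carrier sp_example"
  unfolding finitely_supported_def carrier_sp_example
  using eventually_rational_multiple_if_eventually_zero by blast

lemma subgroup_finitely_supported: "subgroup finitely_supported sp_example"
proof (rule G.subgroupI)
  show "finitely_supported \<noteq> {}"
    using B.one_closed by (auto simp: finitely_supported_def one_residue_box)
next
  fix x y assume x: "x \<in> finitely_supported" and y: "y \<in> finitely_supported"
  then have xB: "x \<in> carrier residue_box" "\<forall>\<^sub>F q in sequentially. x q = 0"
    by (simp_all add: finitely_supported_def)
  have "\<forall>\<^sub>F q in sequentially. (inv\<^bsub>residue_box\<^esub> x) q = 0"
    using xB(2) by eventually_elim (rule inv_residue_box_coord_zero[OF xB(1)])
  then show "inv\<^bsub>sp_example\<^esub> x \<in> finitely_supported"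
    using x finitely_supported_subset xB(1)
    by (auto simp: finitely_supported_def inv_sp_example)
  show "x \<otimes>\<^bsub>sp_example\<^esub> y \<in> finitely_supported"
    using x y unfolding finitely_supported_def mult_sp_example
    by (auto intro: eventually_elim2 mult_residue_box_coord_zero)
qed (rule finitely_supported_subset)

lemma torsion_part_sp_example: "torsion_part sp_example = finitely_supported"
proof (intro equalityI subsetI)
  fix x assume "x \<in> torsion_part sp_example"
  then obtain k :: nat where x: "x \<in> carrier sp_example" "0 < k"
    "x [^]\<^bsub>residue_box\<^esub> k = \<one>\<^bsub>residue_box\<^esub>"
    unfolding torsion_part_def nat_pow_sp_example by (auto simp: sp_example_def)
  then have xB: "x \<in> carrier residue_box" by (simp add: carrier_sp_example)
  have "\<forall>\<^sub>F q in sequentially. [int k * int (x q) = int k * 0] (mod int (modulus q))"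
    using x(3) nat_pow_eq_one_iff[OF xB] by simp
  then have "\<forall>\<^sub>F q in sequentially. [int (x q) = 0] (mod int (modulus q))"
    by (rule eventually_cong_cancel[OF x(2)])
  then show "x \<in> finitely_supported"
    using xB box_coord_eq_0_iff[OF xB] by (simp add: finitely_supported_def)
next
  fix x assume "x \<in> finitely_supported"
  then obtain N where x: "x \<in> carrier residue_box" "\<And>q. N \<le> q \<Longrightarrow> x q = 0"
    by (auto simp: finitely_supported_def eventually_sequentially)
  define k where "k = (\<Prod>r<N. modulus r)"
  \<comment> \<open>\<open>k\<close> kills the finitely many coordinates below \<open>N\<close>\<close>
  have "0 < k" using modulus_pos by (simp add: k_def prod_pos)
  have "[int k * int (x q) = 0] (mod int (modulus q))" for q
  proof (cases "q < N")
    case True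
    then have "int (modulus q) dvd int k" unfolding k_def of_nat_dvd_iff by (intro dvd_prodI) auto
    then show ?thesis by (simp add: cong_0_iff)
  qed (simp add: x(2))
  then have "x [^]\<^bsub>residue_box\<^esub> k = \<one>\<^bsub>residue_box\<^esub>"
    using nat_pow_eq_one_iff[OF x(1)] by blast
  then show "x \<in> torsion_part sp_example"
    using \<open>x \<in> finitely_supported\<close> finitely_supported_subset \<open>0 < k\<close>
    unfolding torsion_part_def by (auto simp: nat_pow_sp_example one_sp_example one_residue_box)
qed

definition supported_at :: "nat \<Rightarrow> (nat \<Rightarrow> nat) set" where
  "supported_at p = {x \<in> carrier residue_box. \<forall>q. q \<noteq> p \<longrightarrow> x q = 0}"

lemma supported_at_subset: "supported_at p \<subseteq> finitely_supported"
proof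
  fix x assume x: "x \<in> supported_at p"
  have "\<forall>\<^sub>F q in sequentially. x q = 0"
    using eventually_gt_at_top[of p] by eventually_elim (use x in \<open>simp add: supported_at_def\<close>)
  then show "x \<in> finitely_supported"
    using x by (simp add: supported_at_def finitely_supported_def)
qed

lemma subgroup_supported_at: "subgroup (supported_at p) sp_example"
proof (rule G.subgroupI)
  show "supported_at p \<subseteq> carrier sp_example"
    using supported_at_subset finitely_supported_subset by blast
  show "supported_at p \<noteq> {}"
    using B.one_closed by (auto simp: supported_at_def one_residue_box)
next
  fix x y assume x: "x \<in> supported_at p" and y: "y \<in> supported_at p"
  have "x \<in> carrier sp_example"
    using x supported_at_subset finitely_supported_subset by blast
  then show "inv\<^bsub>sp_example\<^esub> x \<in> supported_at p"
    using x by (auto simp: supported_at_def inv_sp_example inv_residue_box_coord_zero)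
  show "x \<otimes>\<^bsub>sp_example\<^esub> y \<in> supported_at p"
    using x y by (auto simp: supported_at_def mult_sp_example mult_residue_box_coord_zero)
qed

lemma p_component_sp_example:
  assumes p: "nat_prime p"
  shows "p_component sp_example p = supported_at p"
proof (intro equalityI subsetI)
  fix x assume "x \<in> p_component sp_example p"
  then obtain k :: nat where x: "x \<in> carrier sp_example"
    "x [^]\<^bsub>residue_box\<^esub> (p ^ k) = \<one>\<^bsub>residue_box\<^esub>"
    unfolding p_component_def nat_pow_sp_example by (auto simp: sp_example_def)
  then have xB: "x \<in> carrier residue_box" by (simp add: carrier_sp_example)
  have "x q = 0" if "q \<noteq> p" for q
  proof -
    have "[int (p ^ k) * int (x q) = int (p ^ k) * 0] (mod int (modulus q))"
      using x(2) nat_pow_eq_one_iff[OF xB] by simp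
    moreover have "nat_prime q \<Longrightarrow> \<not> q dvd p ^ k"
      using that p prime_dvd_power primes_dvd_imp_eq by blast
    ultimately show ?thesis
      using cong_modulus_cancel box_coord_eq_0_iff[OF xB] by blast
  qed
  then show "x \<in> supported_at p" using xB by (simp add: supported_at_def)
next
  fix x assume x: "x \<in> supported_at p"
  then have "[int (p ^ p) * int (x q) = 0] (mod int (modulus q))" for q
    using p by (cases "q = p") (simp_all add: supported_at_def modulus_def cong_0_iff)
  then have "x [^]\<^bsub>residue_box\<^esub> (p ^ p) = \<one>\<^bsub>residue_box\<^esub>"
    using x nat_pow_eq_one_iff by (simp add: supported_at_def)
  then show "x \<in> p_component sp_example p"
    using x supported_at_subset finitely_supported_subset
    unfolding p_component_def by (auto simp: nat_pow_sp_example one_sp_example one_residue_box)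
qed

lemma finite_supported_at: "finite (supported_at p)"
proof (rule finite_subset)
  show "supported_at p \<subseteq> (\<lambda>a q. if q = p then a else 0) ` {..<modulus p}"
    by (force simp: supported_at_def carrier_residue_box)
qed simp

definition unit_at :: "nat \<Rightarrow> nat \<Rightarrow> nat" where
  "unit_at p = (\<lambda>q. if q = p then 1 else 0)"

lemma unit_at_supported_at:
  assumes "nat_prime p"
  shows "unit_at p \<in> supported_at p"
proof -
  have "1 < p ^ p"
    using one_less_power[OF prime_gt_1_nat prime_gt_0_nat] assms by blast
  then show ?thesis
    using assms by (auto simp: unit_at_def supported_at_def carrier_residue_box modulus_def prime_gt_0_nat)
qed

lemma supported_at_nontrivial:
  assumes "nat_prime p"
  shows "supported_at p \<noteq> {\<lambda>q. 0}"
proof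
  assume "supported_at p = {\<lambda>q. 0}"
  then have "unit_at p p = 0" using unit_at_supported_at[OF assms] by simp
  then show False by (simp add: unit_at_def)
qed

section \<open>Embedding into the product of the primary components\<close>

lemma carrier_prod_components_sp_example:
  "carrier (prod_components sp_example) = (\<Pi>\<^sub>E p\<in>{p. nat_prime p}. supported_at p)"
  unfolding prod_components_def carrier_product_group
  by (intro PiE_cong) (simp add: p_component_sp_example
      subgroup.carrier_subgroup_generated_subgroup[OF subgroup_supported_at])

definition coord_part :: "nat \<Rightarrow> (nat \<Rightarrow> nat) \<Rightarrow> nat \<Rightarrow> nat" where
  "coord_part p x = (\<lambda>q. if q = p then x q else 0)"

definition components :: "(nat \<Rightarrow> nat) \<Rightarrow> nat \<Rightarrow> nat \<Rightarrow> nat" where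
  "components x = (\<lambda>p\<in>{p. nat_prime p}. coord_part p x)"

definition assemble :: "(nat \<Rightarrow> nat \<Rightarrow> nat) \<Rightarrow> nat \<Rightarrow> nat" where
  "assemble y = (\<lambda>q. if nat_prime q then y q q else 0)"

lemma coord_part_supported_at: "x \<in> carrier residue_box \<Longrightarrow> coord_part p x \<in> supported_at p"
  using modulus_pos by (simp add: coord_part_def supported_at_def carrier_residue_box)

lemma components_hom: "components \<in> hom sp_example (prod_components sp_example)"
proof (rule homI)
  fix x assume "x \<in> carrier sp_example"
  then show "components x \<in> carrier (prod_components sp_example)"
    by (simp add: carrier_prod_components_sp_example components_def coord_part_supported_at
        carrier_sp_example)
next
  fix x y
  have "coord_part p (x \<otimes>\<^bsub>residue_box\<^esub> y) = coord_part p x \<otimes>\<^bsub>residue_box\<^esub> coord_part p y" for p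
    by (rule ext) (simp add: coord_part_def mult_residue_box reduce_def)
  then show "components (x \<otimes>\<^bsub>sp_example\<^esub> y) =
      components x \<otimes>\<^bsub>prod_components sp_example\<^esub> components y"
    unfolding components_def mult_prod_components mult_sp_example by (intro restrict_ext) simp
qed

lemma inj_on_components: "inj_on components (carrier residue_box)"
proof (rule inj_onI)
  fix x y
  assume x: "x \<in> carrier residue_box" and y: "y \<in> carrier residue_box"
    and eq: "components x = components y"
  show "x = y"
  proof
    fix q
    show "x q = y q"
    proof (cases "nat_prime q")
      case True
      then have "components x q q = components y q q" using eq by simp
      then show ?thesis using True by (simp add: components_def coord_part_def)
    next
      case False
      then show ?thesis using x y by (simp add: box_coord_nonprime)
    qed
  qed
qed

lemma components_supported_at:
  "nat_prime p \<Longrightarrow> x \<in> supported_at p \<Longrightarrow>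
    components x = (\<lambda>q\<in>{q. nat_prime q}. if q = p then x else \<one>\<^bsub>sp_example\<^esub>)"
  unfolding components_def coord_part_def one_sp_example
  by (intro restrict_ext ext) (auto simp: supported_at_def)

lemma assemble_closed:
  "y \<in> carrier (prod_components sp_example) \<Longrightarrow> assemble y \<in> carrier residue_box"
  using modulus_pos
  by (auto simp: carrier_prod_components_sp_example assemble_def supported_at_def carrier_residue_box)

lemma components_assemble:
  assumes y: "y \<in> carrier (prod_components sp_example)"
  shows "components (assemble y) = y"
proof
  fix p
  show "components (assemble y) p = y p"
    using y by (auto simp: carrier_prod_components_sp_example components_def assemble_def
        coord_part_def supported_at_def PiE_iff extensional_def)
qed

lemma cong_assemble_if_pow_eq_components:
  assumes y: "y \<in> carrier (prod_components sp_example)"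
    and eq: "y [^]\<^bsub>prod_components sp_example\<^esub> (n::nat) = components x"
  shows "[int n * int (assemble y q) = int (x q)] (mod int (modulus q))"
proof (cases "nat_prime q")
  case True
  have yq: "y q \<in> carrier residue_box"
    using y True by (auto simp: carrier_prod_components_sp_example supported_at_def)
  have "x q = (y q [^]\<^bsub>residue_box\<^esub> n) q"
    using arg_cong[OF eq, of "\<lambda>z. z q q"] True
    by (simp add: nat_pow_prod_components nat_pow_sp_example components_def coord_part_def)
  then show ?thesis
    using True cong_sym[OF cong_nat_pow_residue_box[OF yq, of n q]] by (simp add: assemble_def)
qed (simp add: modulus_def)

lemma pure_subgroup_components:
  "pure_subgroup (components ` carrier sp_example) (prod_components sp_example)"
  unfolding pure_subgroup_def
proof (intro conjI allI impI ballI)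
  show "subgroup (components ` carrier sp_example) (prod_components sp_example)"
    using components_hom G.is_group G.group_prod_components
    by (intro group_hom.img_is_subgroup) (simp add: group_hom_def group_hom_axioms_def)
next
  fix n :: nat and z
  assume n: "0 < n" and z: "z \<in> components ` carrier sp_example"
    and "\<exists>y\<in>carrier (prod_components sp_example). y [^]\<^bsub>prod_components sp_example\<^esub> n = z"
  then obtain y x where y: "y \<in> carrier (prod_components sp_example)"
    and yz: "y [^]\<^bsub>prod_components sp_example\<^esub> n = z"
    and x: "x \<in> carrier sp_example" and zx: "z = components x"
    by blast
  note eq = yz[unfolded zx]
  have "\<forall>\<^sub>F q in sequentially. [int n * int (assemble y q) = int (x q)] (mod int (modulus q))"
    using cong_assemble_if_pow_eq_components[OF y eq] by simp
  moreover have "eventually_rational_multiple x" using x by (simp add: carrier_sp_example)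
  ultimately have "eventually_rational_multiple (assemble y)"
    using n eventually_rational_multiple_divide by blast
  then have "assemble y \<in> carrier sp_example"
    using assemble_closed[OF y] by (simp add: carrier_sp_example)
  then show "\<exists>y\<in>components ` carrier sp_example. y [^]\<^bsub>prod_components sp_example\<^esub> n = z"
    using components_assemble[OF y] yz by (metis image_eqI)
qed

lemma sum_components_subset_components:
  "carrier (sum_components sp_example) \<subseteq> components ` carrier sp_example"
proof
  fix y assume "y \<in> carrier (sum_components sp_example)"
  then have "y \<in> carrier (prod_components sp_example) \<and>
      finite {p \<in> {p. nat_prime p}. y p \<noteq> \<one>\<^bsub>subgroup_generated sp_example (p_component sp_example p)\<^esub>}"
    unfolding sum_components_def prod_components_def
    by (subst (asm) carrier_sum_group) (simp_all only: G.group_subgroup_generated mem_Collect_eq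
        carrier_product_group)
  then have y: "y \<in> carrier (prod_components sp_example)"
    and fin: "finite {p. nat_prime p \<and> y p \<noteq> (\<lambda>q. 0)}"
    by (simp_all add: one_sp_example)
  obtain N where N: "\<And>p. nat_prime p \<Longrightarrow> y p \<noteq> (\<lambda>q. 0) \<Longrightarrow> p < N"
    using fin finite_nat_set_iff_bounded by auto
  have "\<forall>\<^sub>F q in sequentially. assemble y q = 0"
    using eventually_ge_at_top[of N]
  proof eventually_elim
    case (elim q)
    show ?case
    proof (cases "nat_prime q")
      case True
      then have "y q = (\<lambda>q. 0)" using N[of q] elim by linarith
      then show ?thesis using True by (simp add: assemble_def)
    qed (simp add: assemble_def)
  qed
  then have "assemble y \<in> carrier sp_example"
    using assemble_closed[OF y] eventually_rational_multiple_if_eventually_zero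
    by (simp add: carrier_sp_example)
  then show "y \<in> components ` carrier sp_example"
    using components_assemble[OF y] by (metis image_eqI)
qed

lemma sp_group_sp_example: "sp_group sp_example"
  unfolding sp_group_def
proof (intro conjI exI[of _ components])
  have "{p. nat_prime p \<and> p_component sp_example p \<noteq> {\<one>\<^bsub>sp_example\<^esub>}} = {p. nat_prime p}"
    using supported_at_nontrivial by (auto simp: p_component_sp_example one_sp_example)
  then show "infinite {p. nat_prime p \<and> p_component sp_example p \<noteq> {\<one>\<^bsub>sp_example\<^esub>}}"
    using primes_infinite by simp
  show "inj_on components (carrier sp_example)"
    using inj_on_components by (rule inj_on_subset) (auto simp: carrier_sp_example)
  show "\<forall>p x. nat_prime p \<and> x \<in> p_component sp_example p \<longrightarrow>
      components x = (\<lambda>q\<in>{q. nat_prime q}. if q = p then x else \<one>\<^bsub>sp_example\<^esub>)"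
    using components_supported_at p_component_sp_example by blast
qed (rule comm_group_sp_example components_hom pure_subgroup_components
    sum_components_subset_components)+

section \<open>The quotient by the torsion part\<close>

lemma normal_finitely_supported: "finitely_supported \<lhd> sp_example"
  using G.normal_iff_subgroup subgroup_finitely_supported by blast

interpretation T: normal finitely_supported sp_example
  by (rule normal_finitely_supported)

abbreviation quotient_example :: "(nat \<Rightarrow> nat) set monoid" where
  "quotient_example \<equiv> sp_example Mod finitely_supported"

abbreviation mod_torsion :: "(nat \<Rightarrow> nat) \<Rightarrow> (nat \<Rightarrow> nat) set" where
  "mod_torsion x \<equiv> r_coset sp_example finitely_supported x"

lemma rcos_finitely_supported_eq_iff:
  assumes x: "x \<in> carrier sp_example" and y: "y \<in> carrier sp_example"
  shows "mod_torsion x = mod_torsion y \<longleftrightarrow>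
    (\<forall>\<^sub>F q in sequentially. [int (x q) = int (y q)] (mod int (modulus q)))"
proof -
  have xB: "x \<in> carrier residue_box" and yB: "y \<in> carrier residue_box"
    using x y by (simp_all add: carrier_sp_example)
  have "mod_torsion x = mod_torsion y \<longleftrightarrow>
      y \<in> mod_torsion x"
  proof
    assume "mod_torsion x = mod_torsion y"
    then show "y \<in> mod_torsion x"
      by (rule G.repr_independenceD[OF subgroup_finitely_supported y])
  next
    assume "y \<in> mod_torsion x"
    then show "mod_torsion x = mod_torsion y"
      by (rule G.repr_independence[OF _ x subgroup_finitely_supported])
  qed
  also have "\<dots> \<longleftrightarrow> y \<otimes>\<^bsub>sp_example\<^esub> inv\<^bsub>sp_example\<^esub> x \<in> finitely_supported"
    by (rule subgroup.rcos_module[OF subgroup_finitely_supported G.is_group x y])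
  also have "\<dots> \<longleftrightarrow> (\<forall>\<^sub>F q in sequentially. (y \<otimes>\<^bsub>residue_box\<^esub> inv\<^bsub>residue_box\<^esub> x) q = 0)"
    using B.m_closed[OF yB B.inv_closed[OF xB]]
    by (simp add: finitely_supported_def mult_sp_example inv_sp_example[OF x])
  also have "\<dots> \<longleftrightarrow> (\<forall>\<^sub>F q in sequentially. [int (x q) = int (y q)] (mod int (modulus q)))"
  proof -
    have "(y \<otimes>\<^bsub>residue_box\<^esub> inv\<^bsub>residue_box\<^esub> x) q = 0 \<longleftrightarrow>
        [int (y q) - int (x q) = 0] (mod int (modulus q))" for q
      using box_coord_eq_0_iff[OF B.m_closed[OF yB B.inv_closed[OF xB]], of q]
        cong_mult_inv_residue_box[OF xB, of y q]
      by (simp add: cong_def)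
    then have "(y \<otimes>\<^bsub>residue_box\<^esub> inv\<^bsub>residue_box\<^esub> x) q = 0 \<longleftrightarrow>
        [int (x q) = int (y q)] (mod int (modulus q))" for q
      by (metis cong_diff_iff_cong_0 cong_sym)
    then show ?thesis by simp
  qed
  finally show ?thesis .
qed

lemma rcos_int_pow_eq_iff:
  assumes x: "x \<in> carrier sp_example" and y: "y \<in> carrier sp_example"
  shows "(mod_torsion x) [^]\<^bsub>quotient_example\<^esub> (n::int) =
      (mod_torsion y) [^]\<^bsub>quotient_example\<^esub> (m::int) \<longleftrightarrow>
    (\<forall>\<^sub>F q in sequentially. [n * int (x q) = m * int (y q)] (mod int (modulus q)))"
proof -
  have xB: "x \<in> carrier residue_box" and yB: "y \<in> carrier residue_box"
    using x y by (simp_all add: carrier_sp_example)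
  have "[int ((x [^]\<^bsub>residue_box\<^esub> n) q) = int ((y [^]\<^bsub>residue_box\<^esub> m) q)] (mod int (modulus q)) \<longleftrightarrow>
      [n * int (x q) = m * int (y q)] (mod int (modulus q))" for q
    using cong_int_pow_residue_box[OF xB, of n q] cong_int_pow_residue_box[OF yB, of m q]
    by (meson cong_sym cong_trans)
  then show ?thesis
    unfolding T.FactGroup_int_pow[OF x] T.FactGroup_int_pow[OF y]
    using rcos_finitely_supported_eq_iff[OF G.int_pow_closed[OF x] G.int_pow_closed[OF y]]
    unfolding int_pow_sp_example[OF x] int_pow_sp_example[OF y]
    by simp
qed

lemma carrier_quotient:
  "carrier (quotient_example) =
    mod_torsion ` carrier sp_example"
  by (rule carrier_FactGroup)

lemma one_quotient:
  "\<one>\<^bsub>quotient_example\<^esub> = mod_torsion \<one>\<^bsub>sp_example\<^esub>"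
  using subgroup.subset[OF subgroup_finitely_supported] by simp

lemma rank_one_group_quotient:
  "rank_one_group (quotient_example) (mod_torsion e_seq)"
proof (intro rank_one_group.intro rank_one_group_axioms.intro)
  interpret Q: comm_group "quotient_example"
    by (rule G.abelian_FactGroup[OF subgroup_finitely_supported])
  show "comm_group (quotient_example)" ..
  show "mod_torsion e_seq \<in> carrier (quotient_example)"
    using e_seq_closed by (simp add: carrier_quotient)
next
  fix n :: nat
  assume n: "0 < n"
  show "(mod_torsion e_seq) [^]\<^bsub>quotient_example\<^esub> n \<noteq>
      \<one>\<^bsub>quotient_example\<^esub>"
  proof
    assume "(mod_torsion e_seq) [^]\<^bsub>quotient_example\<^esub> n =
        \<one>\<^bsub>quotient_example\<^esub>"
    then have "(mod_torsion e_seq) [^]\<^bsub>quotient_example\<^esub> int n =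
        (mod_torsion \<one>\<^bsub>sp_example\<^esub>) [^]\<^bsub>quotient_example\<^esub> (0::int)"
      by (simp add: int_pow_int one_quotient)
    then have "\<forall>\<^sub>F q in sequentially. [int n * int (e_seq q) = int n * 0] (mod int (modulus q))"
      unfolding rcos_int_pow_eq_iff[OF e_seq_closed G.one_closed] by (simp add: one_sp_example)
    then have "\<forall>\<^sub>F q in sequentially. [int (e_seq q) = 0] (mod int (modulus q))"
      by (rule eventually_cong_cancel[OF n])
    then show False using e_seq_not_cong_zero ex_prime_if_eventually by blast
  qed
next
  fix z
  assume "z \<in> carrier (quotient_example)"
  then obtain x where x: "x \<in> carrier sp_example" and z: "z = mod_torsion x"
    by (auto simp: carrier_quotient)
  then obtain n m where n: "0 < n"
    and nm: "\<forall>\<^sub>F q in sequentially. [int n * int (x q) = m * int (e_seq q)] (mod int (modulus q))"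
    by (auto simp: carrier_sp_example elim: eventually_rational_multipleE)
  then have "z [^]\<^bsub>quotient_example\<^esub> int n =
      (mod_torsion e_seq) [^]\<^bsub>quotient_example\<^esub> m"
    using rcos_int_pow_eq_iff[OF x e_seq_closed] z by simp
  then show "\<exists>n::nat. 0 < n \<and> (\<exists>m::int. z [^]\<^bsub>quotient_example\<^esub> n =
      (mod_torsion e_seq) [^]\<^bsub>quotient_example\<^esub> m)"
    using n by (auto simp: int_pow_int)
qed

lemma divisible_rank_one_group_quotient:
  "divisible_rank_one_group (quotient_example)
    (mod_torsion e_seq)"
proof (intro divisible_rank_one_group.intro divisible_rank_one_group_axioms.intro
    rank_one_group_quotient)
  interpret Q: comm_group "quotient_example"
    by (rule G.abelian_FactGroup[OF subgroup_finitely_supported])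
  fix z and k :: nat
  assume zQ: "z \<in> carrier (quotient_example)" and k: "0 < k"
  then obtain x where x: "x \<in> carrier sp_example" and z: "z = mod_torsion x"
    by (auto simp: carrier_quotient)
  have z1: "z [^]\<^bsub>quotient_example\<^esub> (1::int) = z"
    using zQ by simp
  {
    assume "z [^]\<^bsub>quotient_example\<^esub> k = \<one>\<^bsub>quotient_example\<^esub>"
    then have "z [^]\<^bsub>quotient_example\<^esub> int k =
        (mod_torsion \<one>\<^bsub>sp_example\<^esub>) [^]\<^bsub>quotient_example\<^esub> (0::int)"
      by (simp add: int_pow_int one_quotient)
    then have "\<forall>\<^sub>F q in sequentially. [int k * int (x q) = int k * 0] (mod int (modulus q))"
      unfolding z rcos_int_pow_eq_iff[OF x G.one_closed] by (simp add: one_sp_example)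
    then have "\<forall>\<^sub>F q in sequentially. [1 * int (x q) = 1 * int (\<one>\<^bsub>sp_example\<^esub> q)] (mod int (modulus q))"
      using eventually_cong_cancel[OF k] by (simp add: one_sp_example)
    then have "z [^]\<^bsub>quotient_example\<^esub> (1::int) =
        (mod_torsion \<one>\<^bsub>sp_example\<^esub>) [^]\<^bsub>quotient_example\<^esub> (1::int)"
      unfolding z rcos_int_pow_eq_iff[OF x G.one_closed] .
    then show "z = \<one>\<^bsub>quotient_example\<^esub>"
      using z1 Q.int_pow_1[OF Q.one_closed] by (simp add: one_quotient[symmetric])
  }
  obtain w where w: "w \<in> carrier residue_box"
    and kw: "\<forall>\<^sub>F q in sequentially. [int k * int (w q) = int (x q)] (mod int (modulus q))"
    using residue_box_eventually_divisible[OF k] by blast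
  have "w \<in> carrier sp_example"
    using x w eventually_rational_multiple_divide[OF _ k kw] by (simp add: carrier_sp_example)
  moreover have "(mod_torsion w) [^]\<^bsub>quotient_example\<^esub> int k =
      z [^]\<^bsub>quotient_example\<^esub> (1::int)"
    unfolding z rcos_int_pow_eq_iff[OF \<open>w \<in> carrier sp_example\<close> x] using kw by simp
  ultimately show "\<exists>w\<in>carrier (quotient_example).
      w [^]\<^bsub>quotient_example\<^esub> k = z"
    using z1 carrier_quotient by (metis image_eqI int_pow_int)
qed

section \<open>An endomorphism whose images never stabilise\<close>

definition scale_by_index :: "(nat \<Rightarrow> nat) \<Rightarrow> nat \<Rightarrow> nat" where
  "scale_by_index x = reduce (\<lambda>q. int q * int (x q))"

lemma scale_by_index_mult:
  "scale_by_index (x \<otimes>\<^bsub>residue_box\<^esub> y) = scale_by_index x \<otimes>\<^bsub>residue_box\<^esub> scale_by_index y"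
  unfolding scale_by_index_def mult_residue_box reduce_eq_iff cong_def
  by (simp add: int_reduce mod_mult_right_eq mod_add_eq distrib_left)

lemma funpow_scale_by_index:
  assumes "x \<in> carrier residue_box"
  shows "(scale_by_index ^^ k) x = reduce (\<lambda>q. int q ^ k * int (x q))"
proof (induction k)
  case 0
  then show ?case using assms by (simp add: reduce_of_box)
next
  case (Suc k)
  then show ?case
    unfolding funpow.simps comp_apply scale_by_index_def reduce_eq_iff cong_def
    by (simp add: int_reduce mod_mult_right_eq mult.assoc)
qed

lemma scale_by_index_closed:
  assumes x: "x \<in> carrier sp_example"
  shows "scale_by_index x \<in> carrier sp_example"
proof -
  obtain n m where n: "0 < n"
    and nm: "\<forall>\<^sub>F q in sequentially. [int n * int (x q) = m * int (e_seq q)] (mod int (modulus q))"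
    using x by (auto simp: carrier_sp_example elim: eventually_rational_multipleE)
  have "\<forall>\<^sub>F q in sequentially. [int n * int (scale_by_index x q) = 0 * int (e_seq q)] (mod int (modulus q))"
    using nm
  proof eventually_elim
    case (elim q)
    have "[int n * int (scale_by_index x q) = int q * (int n * int (x q))] (mod int (modulus q))"
      using cong_scalar_left[OF cong_reduce[of "\<lambda>q. int q * int (x q)" q], of "int n"]
      by (simp add: scale_by_index_def mult.left_commute)
    also have "[int q * (int n * int (x q)) = m * (int q * int (e_seq q))] (mod int (modulus q))"
      using cong_scalar_left[OF elim, of "int q"] by (simp add: mult.left_commute)
    also have "[m * (int q * int (e_seq q)) = m * 0] (mod int (modulus q))"
      by (rule cong_scalar_left[OF index_mult_e_seq_cong_zero])
    finally show ?case by simp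
  qed
  then have "eventually_rational_multiple (scale_by_index x)"
    by (rule eventually_rational_multipleI[OF n])
  then show ?thesis by (simp add: carrier_sp_example scale_by_index_def)
qed

lemma scale_by_index_finitely_supported:
  assumes "x \<in> finitely_supported"
  shows "scale_by_index x \<in> finitely_supported"
proof -
  have "\<forall>\<^sub>F q in sequentially. x q = 0" using assms by (simp add: finitely_supported_def)
  then have "\<forall>\<^sub>F q in sequentially. scale_by_index x q = 0"
    by eventually_elim (simp add: scale_by_index_def reduce_def)
  then show ?thesis by (simp add: finitely_supported_def scale_by_index_def)
qed

lemma scale_by_index_hom: "scale_by_index \<in> hom sp_example sp_example"
  by (rule homI) (simp_all add: scale_by_index_closed mult_sp_example scale_by_index_mult)

lemma scale_by_index_hom_torsion:
  "scale_by_index \<in> hom (subgroup_generated sp_example finitely_supported)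
    (subgroup_generated sp_example finitely_supported)"
  using subgroup.carrier_subgroup_generated_subgroup[OF subgroup_finitely_supported]
  by (intro homI) (simp_all add: scale_by_index_finitely_supported mult_sp_example scale_by_index_mult)

lemma funpow_scale_by_index_unit_at_notin_image:
  assumes q: "nat_prime q" "Suc n < q" and z: "z \<in> carrier residue_box"
  shows "(scale_by_index ^^ n) (unit_at q) \<noteq> (scale_by_index ^^ Suc n) z"
proof
  assume eq: "(scale_by_index ^^ n) (unit_at q) = (scale_by_index ^^ Suc n) z"
  have unit: "unit_at q \<in> carrier residue_box"
    using unit_at_supported_at[OF q(1)] by (simp add: supported_at_def)
  have q1: "1 < q" using prime_gt_1_nat[OF q(1)] .
  have "q ^ Suc n dvd q ^ q"
    using q(2) by (intro le_imp_power_dvd) simp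
  then have dvd: "int q ^ Suc n dvd int (q ^ q)"
    by (metis of_nat_dvd_iff of_nat_power)
  have "[int q ^ n = int q ^ Suc n * int (z q)] (mod int (q ^ q))"
    using arg_cong[OF eq, of "\<lambda>f. int (f q)"] q(1)
    unfolding funpow_scale_by_index[OF unit] funpow_scale_by_index[OF z]
    by (simp add: int_reduce unit_at_def modulus_def cong_def)
  then have "int q ^ Suc n dvd int q ^ n"
    using dvd by (metis cong_dvd_iff cong_dvd_modulus dvd_triv_left)
  then have "int q ^ Suc n \<le> int q ^ n"
    using q1 by (intro zdvd_imp_le) simp_all
  moreover have "int q ^ n < int q ^ Suc n"
    using q1 by (intro power_strict_increasing) simp_all
  ultimately show False by simp
qed

lemma image_funpow_scale_by_index_neq:
  assumes "A \<subseteq> carrier residue_box" "\<And>q. nat_prime q \<Longrightarrow> unit_at q \<in> A"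
  shows "(scale_by_index ^^ n) ` A \<noteq> (scale_by_index ^^ Suc n) ` A"
proof
  assume eq: "(scale_by_index ^^ n) ` A = (scale_by_index ^^ Suc n) ` A"
  obtain q where q: "nat_prime q" "Suc n < q" using bigger_prime by blast
  then have "(scale_by_index ^^ n) (unit_at q) \<in> (scale_by_index ^^ Suc n) ` A"
    using eq assms(2) by blast
  then show False
    using funpow_scale_by_index_unit_at_notin_image[OF q] assms(1) by blast
qed

lemma not_strongly_co_hopfian_sp_example: "\<not> strongly_co_hopfian sp_example"
proof -
  have "carrier sp_example \<subseteq> carrier residue_box" by (auto simp: carrier_sp_example)
  moreover have "unit_at q \<in> carrier sp_example" if "nat_prime q" for q
    using unit_at_supported_at[OF that] supported_at_subset finitely_supported_subset by blast
  ultimately have "(scale_by_index ^^ n) ` carrier sp_example \<noteq>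
      (scale_by_index ^^ Suc n) ` carrier sp_example" for n
    by (rule image_funpow_scale_by_index_neq)
  then show ?thesis
    unfolding strongly_co_hopfian_def using scale_by_index_hom by blast
qed

lemma not_strongly_co_hopfian_finitely_supported:
  "\<not> strongly_co_hopfian (subgroup_generated sp_example finitely_supported)"
proof -
  have carrier: "carrier (subgroup_generated sp_example finitely_supported) = finitely_supported"
    by (rule subgroup.carrier_subgroup_generated_subgroup[OF subgroup_finitely_supported])
  have "finitely_supported \<subseteq> carrier residue_box" by (auto simp: finitely_supported_def)
  moreover have "unit_at q \<in> finitely_supported" if "nat_prime q" for q
    using unit_at_supported_at[OF that] supported_at_subset by blast
  ultimately have "(scale_by_index ^^ n) ` finitely_supported \<noteq>
      (scale_by_index ^^ Suc n) ` finitely_supported" for n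
    by (rule image_funpow_scale_by_index_neq)
  then show ?thesis
    unfolding strongly_co_hopfian_def carrier using scale_by_index_hom_torsion by blast
qed

theorem mainTheorem17:
  shows "\<exists>G :: (nat \<Rightarrow> nat) monoid.
     comm_group G \<and> sp_group G \<and>
     (\<forall>p. nat_prime p \<longrightarrow> finite (p_component G p)) \<and>
     has_tf_rank (G Mod torsion_part G) 1 \<and>
     strongly_co_hopfian (G Mod torsion_part G) \<and>
     \<not> strongly_co_hopfian (subgroup_generated G (torsion_part G)) \<and>
     \<not> strongly_co_hopfian G"
proof (intro exI[of _ sp_example] conjI allI impI)
  show "comm_group sp_example" by (rule comm_group_sp_example)
  show "sp_group sp_example" by (rule sp_group_sp_example)
  show "finite (p_component sp_example p)" if "nat_prime p" for p
    using that finite_supported_at by (simp add: p_component_sp_example)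
  show "has_tf_rank (sp_example Mod torsion_part sp_example) 1"
    unfolding torsion_part_sp_example using rank_one_group_quotient by (rule rank_one_group.has_tf_rank_one)
  show "strongly_co_hopfian (sp_example Mod torsion_part sp_example)"
    unfolding torsion_part_sp_example using divisible_rank_one_group_quotient
    by (rule divisible_rank_one_group.strongly_co_hopfian)
  show "\<not> strongly_co_hopfian (subgroup_generated sp_example (torsion_part sp_example))"
    unfolding torsion_part_sp_example by (rule not_strongly_co_hopfian_finitely_supported)
  show "\<not> strongly_co_hopfian sp_example" by (rule not_strongly_co_hopfian_sp_example)
qed

end
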